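(* Let $T$ be a $3$-CET with exactly one flip, with domain $S^1\setminus\{a_0,a_1,a_2\}$ where $0=a_0<a_1<a_2<a_3=1$ and $I_i=(a_{i-1},a_i)$, $i=1,2,3$, such that $I_1$ is the flip of $T$ and $T(I_1)<T(I_3)<T(I_2)$ in the cyclic order. Assume that $T$ has no periodic points. Then there exists $N\ge 2$ such that $T^n(I_1)\cap I_1=\emptyset$ for all $1\le n\le N-1$ and $T^N(I_1)\cap I_1\neq\emptyset$. Furthermore, the sets $T^n(I_1)$, $0\le n\le N-1$, are pairwise disjoint.
   Context: $S^1=[0,1]/(0\sim1)$ with orientation induced by $[0,1]$ and points written as points of $[0,1]$. A $3$-CET is an injective map $T:I_1\cup I_2\cup I_3\to S^1$, where $I_1,I_2,I_3$ are pairwise disjoint open subintervals whose closures cover $S^1$, which is an isometry on each $I_i$ and cannot be continuously extended to a larger open set. A flip is an $I_i$ on which $T$ reverses orientation. For a set $J$, $T^n(J)=\{T^n(x): x\in J\cap \mathrm{Dom}(T^n)\}$. For subintervals $J_1,J_2,J_3$ of $S^1$, $J_1<J_2<J_3$ means every triple $(x_1,x_2,x_3)\in J_1\times J_2\times J_3$ is cyclically ordered. A periodic point is $p$ with $T^m(p)=p$ for some $m\ge1$. *)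

theory Defs
  imports "HOL-Analysis.Analysis"
begin

text \<open>The circle S^1 = [0,1]/(0~1) is represented by points of [0,1) (reals);
  the projection to a point of the circle is frac.  For topological notions we
  use the embedding circ x = cis (2 pi x) into the unit circle of the complex plane.\<close>

definition circ :: "real \<Rightarrow> complex" where
  "circ x = cis (2 * pi * x)"

definition cyc :: "real \<Rightarrow> real \<Rightarrow> real \<Rightarrow> bool" where
  "cyc x y z \<longleftrightarrow> (x < y \<and> y < z) \<or> (y < z \<and> z < x) \<or> (z < x \<and> x < y)"

definition cyc_sets :: "real set \<Rightarrow> real set \<Rightarrow> real set \<Rightarrow> bool" where
  "cyc_sets A B C \<longleftrightarrow> (\<forall>x\<in>A. \<forall>y\<in>B. \<forall>z\<in>C. cyc x y z)"

definition cet_dom :: "real \<Rightarrow> real \<Rightarrow> real set" where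
  "cet_dom a1 a2 = {0<..<a1} \<union> {a1<..<a2} \<union> {a2<..<1}"

definition cet3_flip1 :: "(real \<Rightarrow> real) \<Rightarrow> real \<Rightarrow> real \<Rightarrow> bool" where
  "cet3_flip1 T a1 a2 \<longleftrightarrow>
     0 < a1 \<and> a1 < a2 \<and> a2 < 1 \<and>
     (\<exists>c1. \<forall>x\<in>{0<..<a1}. T x = frac (c1 - x)) \<and>
     (\<exists>c2. \<forall>x\<in>{a1<..<a2}. T x = frac (x + c2)) \<and>
     (\<exists>c3. \<forall>x\<in>{a2<..<1}. T x = frac (x + c3)) \<and>
     inj_on T (cet_dom a1 a2) \<and>
     \<not> (\<exists>U g. openin (top_of_set (sphere 0 1)) U \<and> circ ` cet_dom a1 a2 \<subset> U \<and>
            continuous_on U g \<and> g ` U \<subseteq> sphere 0 1 \<and>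
            (\<forall>x\<in>cet_dom a1 a2. g (circ x) = circ (T x)))"

definition iter_dom :: "(real \<Rightarrow> real) \<Rightarrow> real set \<Rightarrow> nat \<Rightarrow> real set" where
  "iter_dom T D n = {x. \<forall>k<n. (T ^^ k) x \<in> D}"

definition iter_img :: "(real \<Rightarrow> real) \<Rightarrow> real set \<Rightarrow> nat \<Rightarrow> real set \<Rightarrow> real set" where
  "iter_img T D n J = (T ^^ n) ` (J \<inter> iter_dom T D n)"

definition has_periodic_point :: "(real \<Rightarrow> real) \<Rightarrow> real set \<Rightarrow> bool" where
  "has_periodic_point T D \<longleftrightarrow> (\<exists>p m. m \<ge> 1 \<and> p \<in> iter_dom T D m \<and> (T ^^ m) p = p)"

end

theory Submission imports Defs begin

text \<open>The flip interval I1 and its images under T have positive Lebesgue measure a1, which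
  T preserves, while all of them lie in [0,1).  So the images cannot be pairwise disjoint forever
  and I1 must return to itself; let N be the first return time.  Injectivity of T makes the
  images before time N pairwise disjoint, since a common point of T^m(I1) and T^n(I1), m < n,
  would give an earlier return at time n - m.  Finally N \<noteq> 1: on the flip, T is
  x \<mapsto> c - x (mod 1), so a point of I1 mapped into I1 would be fixed by T^2.\<close>

section \<open>Iterates of a partially defined injective map\<close>

lemma iter_img_0 [simp]: "iter_img T D 0 J = J"
  unfolding iter_img_def iter_dom_def by simp

lemma iter_img_Suc: "iter_img T D (Suc n) J = T ` (iter_img T D n J \<inter> D)"
  unfolding iter_img_def iter_dom_def by (auto simp: less_Suc_eq image_iff)

lemma inj_on_funpow_iter_dom:
  assumes "inj_on T D"
  shows "inj_on (T ^^ n) (iter_dom T D n)"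
proof (induction n)
  case 0
  then show ?case by simp
next
  case (Suc n)
  show ?case
  proof (rule inj_onI)
    fix x y assume x: "x \<in> iter_dom T D (Suc n)" and y: "y \<in> iter_dom T D (Suc n)"
      and eq: "(T ^^ Suc n) x = (T ^^ Suc n) y"
    have "x \<in> iter_dom T D n" "(T ^^ n) x \<in> D" "y \<in> iter_dom T D n" "(T ^^ n) y \<in> D"
      using x y unfolding iter_dom_def by auto
    with eq assms Suc.IH show "x = y" by (auto simp: inj_on_def)
  qed
qed

lemma mem_iter_img_diff:
  assumes inj: "inj_on T D"
    and x: "x \<in> J \<inter> iter_dom T D m" and x': "x' \<in> J \<inter> iter_dom T D n"
    and eq: "(T ^^ m) x = (T ^^ n) x'" and "m \<le> n"
  shows "x \<in> iter_img T D (n - m) J"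
proof -
  define z where "z = (T ^^ (n - m)) x'"
  have "(T ^^ m) z = (T ^^ n) x'"
    unfolding z_def using \<open>m \<le> n\<close> by (metis funpow_add le_add_diff_inverse o_apply)
  moreover have "z \<in> iter_dom T D m"
    unfolding iter_dom_def
  proof (intro CollectI allI impI)
    fix k assume "k < m"
    then have "k + (n - m) < n" using \<open>m \<le> n\<close> by simp
    moreover have "(T ^^ k) z = (T ^^ (k + (n - m))) x'" unfolding z_def by (simp add: funpow_add)
    ultimately show "(T ^^ k) z \<in> D" using x' unfolding iter_dom_def by auto
  qed
  ultimately have "x = z"
    using inj_on_funpow_iter_dom[OF inj, of m] x eq by (auto simp: inj_on_def)
  moreover have "x' \<in> J \<inter> iter_dom T D (n - m)" using x' unfolding iter_dom_def by auto
  ultimately show ?thesis unfolding iter_img_def z_def by blast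
qed

lemma iter_img_disjoint_before_return:
  assumes inj: "inj_on T D"
    and no_return: "\<forall>k\<in>{1..<N}. iter_img T D k J \<inter> J = {}"
    and "m < N" "n < N" "m \<noteq> n"
  shows "iter_img T D m J \<inter> iter_img T D n J = {}"
proof -
  have ordered: "iter_img T D m J \<inter> iter_img T D n J = {}" if "m < n" "n < N" for m n
  proof (rule ccontr)
    assume "iter_img T D m J \<inter> iter_img T D n J \<noteq> {}"
    then obtain x x' where x: "x \<in> J \<inter> iter_dom T D m" and x': "x' \<in> J \<inter> iter_dom T D n"
      and eq: "(T ^^ m) x = (T ^^ n) x'" unfolding iter_img_def by blast
    have "x \<in> iter_img T D (n - m) J \<inter> J"
      using mem_iter_img_diff[OF inj x x' eq] x \<open>m < n\<close> by simp
    moreover have "n - m \<in> {1..<N}" using \<open>m < n\<close> \<open>n < N\<close> by auto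
    ultimately show False using no_return by blast
  qed
  then show ?thesis
    using ordered[of m n] ordered[of n m] assms(3-5) by (metis Int_commute linorder_neqE_nat)
qed

lemma first_return:
  assumes inj: "inj_on T D" and returns: "\<exists>d\<ge>1. iter_img T D d J \<inter> J \<noteq> {}"
  obtains N where "N \<ge> 1"
    and "\<forall>n\<in>{1..N-1}. iter_img T D n J \<inter> J = {}"
    and "iter_img T D N J \<inter> J \<noteq> {}"
    and "\<forall>m<N. \<forall>n<N. m \<noteq> n \<longrightarrow> iter_img T D m J \<inter> iter_img T D n J = {}"
proof -
  define N where "N = (LEAST d. 1 \<le> d \<and> iter_img T D d J \<inter> J \<noteq> {})"
  have N: "1 \<le> N \<and> iter_img T D N J \<inter> J \<noteq> {}"
    unfolding N_def using returns by (rule LeastI_ex)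
  have before: "\<forall>k\<in>{1..<N}. iter_img T D k J \<inter> J = {}"
  proof
    fix k assume "k \<in> {1..<N}"
    then show "iter_img T D k J \<inter> J = {}"
      using not_less_Least[of k "\<lambda>d. 1 \<le> d \<and> iter_img T D d J \<inter> J \<noteq> {}"]
      unfolding N_def by auto
  qed
  have "{1..N-1} = {1..<N}" using N by auto
  with N before iter_img_disjoint_before_return[OF inj before] show ?thesis
    by (intro that[of N]) simp_all
qed

section \<open>Measure preservation by piecewise isometries of the line\<close>

lemma emeasure_image_pieces:
  fixes P :: "'i::countable \<Rightarrow> 'a set"
  assumes P: "\<And>i. P i \<in> sets M" and disj: "disjoint_family P"
    and A: "A \<in> sets M" and cover: "A \<subseteq> (\<Union>i. P i)" and inj: "inj_on f A"
    and preserves: "\<And>i X. X \<in> sets M \<Longrightarrow> X \<subseteq> A \<inter> P i \<Longrightarrow>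
                       f ` X \<in> sets M \<and> emeasure M (f ` X) = emeasure M X"
  shows "f ` A \<in> sets M \<and> emeasure M (f ` A) = emeasure M A"
proof -
  define X where "X i = A \<inter> P i" for i
  have X: "X i \<in> sets M" for i unfolding X_def using A P by auto
  have fX: "f ` X i \<in> sets M" "emeasure M (f ` X i) = emeasure M (X i)" for i
    using preserves[OF X] unfolding X_def by auto
  have A_eq: "A = (\<Union>i. X i)" unfolding X_def using cover by auto
  have disjX: "disjoint_family X" using disj unfolding X_def disjoint_family_on_def by auto
  have disj_fX: "disjoint_family (\<lambda>i. f ` X i)"
    unfolding disjoint_family_on_def
  proof (intro ballI impI)
    fix i j :: 'i assume "i \<noteq> j"
    have "X i \<subseteq> A" "X j \<subseteq> A" unfolding X_def by auto
    then show "f ` X i \<inter> f ` X j = {}"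
      using inj disjX \<open>i \<noteq> j\<close> unfolding disjoint_family_on_def inj_on_def by blast
  qed
  have fA_eq: "f ` A = (\<Union>i. f ` X i)" by (subst A_eq) auto
  have "emeasure M (f ` A) = (\<integral>\<^sup>+i. emeasure M (f ` X i) \<partial>count_space UNIV)"
    unfolding fA_eq by (rule emeasure_UN_countable) (use fX disj_fX in auto)
  also have "\<dots> = (\<integral>\<^sup>+i. emeasure M (X i) \<partial>count_space UNIV)" by (simp add: fX)
  also have "\<dots> = emeasure M A"
    by (subst A_eq, rule emeasure_UN_countable[symmetric]) (use X disjX in auto)
  finally show ?thesis using fA_eq fX by auto
qed

lemma emeasure_lborel_affine_image:
  fixes s t :: real
  assumes "\<bar>s\<bar> = 1" and B: "B \<in> sets lborel"
  shows "(\<lambda>x. s * x + t) ` B \<in> sets lborel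
       \<and> emeasure lborel ((\<lambda>x. s * x + t) ` B) = emeasure lborel B"
proof -
  have "s \<noteq> 0" using assms by auto
  have img: "(\<lambda>x. s * x + t) ` B = (\<lambda>y. (y - t) / s) -` B"
  proof
    show "(\<lambda>y. (y - t) / s) -` B \<subseteq> (\<lambda>x. s * x + t) ` B"
    proof
      fix y assume "y \<in> (\<lambda>y. (y - t) / s) -` B"
      moreover have "y = s * ((y - t) / s) + t" using \<open>s \<noteq> 0\<close> by simp
      ultimately show "y \<in> (\<lambda>x. s * x + t) ` B" by blast
    qed
  qed (use \<open>s \<noteq> 0\<close> in auto)
  have "(\<lambda>y. (y - t) / s) \<in> borel_measurable borel" by measurable
  from measurable_sets[OF this, of B] have meas: "(\<lambda>x. s * x + t) ` B \<in> sets lborel"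
    unfolding img using B by simp
  have "emeasure lborel ((\<lambda>x. s * x + t) ` B)
     = emeasure (density (distr lborel borel (\<lambda>x. t + s * x)) (\<lambda>_. ennreal \<bar>s\<bar>))
         ((\<lambda>x. s * x + t) ` B)"
    using lborel_real_affine[OF \<open>s \<noteq> 0\<close>, of t] by simp
  also have "\<dots> = emeasure (distr lborel borel (\<lambda>x. t + s * x)) ((\<lambda>x. s * x + t) ` B)"
    using assms(1) meas by (simp add: emeasure_density_const)
  also have "\<dots> = emeasure lborel ((\<lambda>x. t + s * x) -` ((\<lambda>x. s * x + t) ` B))"
    using meas by (subst emeasure_distr) auto
  also have "(\<lambda>x. t + s * x) -` ((\<lambda>x. s * x + t) ` B) = B"
    using \<open>s \<noteq> 0\<close> by (auto simp: add.commute)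
  finally show ?thesis using meas by simp
qed

lemma emeasure_lborel_frac_affine_image:
  fixes s c :: real
  assumes "\<bar>s\<bar> = 1" and B: "B \<in> sets lborel" and inj: "inj_on f B"
    and f: "\<And>x. x \<in> B \<Longrightarrow> f x = frac (s * x + c)"
  shows "f ` B \<in> sets lborel \<and> emeasure lborel (f ` B) = emeasure lborel B"
proof (rule emeasure_image_pieces[where P = "\<lambda>k::int. {x. \<lfloor>s * x + c\<rfloor> = k}"])
  show "{x. \<lfloor>s * x + c\<rfloor> = k} \<in> sets lborel" for k by measurable
  show "disjoint_family (\<lambda>k::int. {x. \<lfloor>s * x + c\<rfloor> = k})"
    unfolding disjoint_family_on_def by auto
  fix k :: int and X assume X: "X \<in> sets lborel" "X \<subseteq> B \<inter> {x. \<lfloor>s * x + c\<rfloor> = k}"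
  then have "f ` X = (\<lambda>x. s * x + (c - of_int k)) ` X"
    using f by (force simp: frac_def algebra_simps)
  then show "f ` X \<in> sets lborel \<and> emeasure lborel (f ` X) = emeasure lborel X"
    using emeasure_lborel_affine_image[OF assms(1) X(1)] by simp
qed (use assms in auto)

section \<open>Three-interval circle exchanges with a flip on the first interval\<close>

lemma cet3_flip1E:
  assumes "cet3_flip1 T a1 a2"
  obtains c1 c2 c3 where "0 < a1" "a1 < a2" "a2 < 1" "inj_on T (cet_dom a1 a2)"
    and "\<And>x. x \<in> {0<..<a1} \<Longrightarrow> T x = frac (c1 - x)"
    and "\<And>x. x \<in> {a1<..<a2} \<Longrightarrow> T x = frac (x + c2)"
    and "\<And>x. x \<in> {a2<..<1} \<Longrightarrow> T x = frac (x + c3)"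
proof -
  from assms obtain c1 c2 c3 where "0 < a1" "a1 < a2" "a2 < 1" "inj_on T (cet_dom a1 a2)"
    and "\<forall>x\<in>{0<..<a1}. T x = frac (c1 - x)"
    and "\<forall>x\<in>{a1<..<a2}. T x = frac (x + c2)"
    and "\<forall>x\<in>{a2<..<1}. T x = frac (x + c3)"
    unfolding cet3_flip1_def by (elim conjE exE)
  then show ?thesis by (intro that[of c1 c2 c3]) simp_all
qed

lemma cet3_flip1_range:
  assumes "cet3_flip1 T a1 a2" and "x \<in> cet_dom a1 a2"
  shows "T x \<in> {0..<1}"
  using assms(1) by (rule cet3_flip1E) (use assms(2) in \<open>auto simp: cet_dom_def frac_lt_1\<close>)

lemma cet3_flip1_emeasure_image:
  assumes cet: "cet3_flip1 T a1 a2" and B: "B \<in> sets lborel" and "B \<subseteq> cet_dom a1 a2"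
  shows "T ` B \<in> sets lborel \<and> emeasure lborel (T ` B) = emeasure lborel B"
proof -
  obtain c1 c2 c3 where ord: "0 < a1" "a1 < a2" "a2 < 1" and inj: "inj_on T (cet_dom a1 a2)"
    and T1: "\<And>x. x \<in> {0<..<a1} \<Longrightarrow> T x = frac (c1 - x)"
    and T2: "\<And>x. x \<in> {a1<..<a2} \<Longrightarrow> T x = frac (x + c2)"
    and T3: "\<And>x. x \<in> {a2<..<1} \<Longrightarrow> T x = frac (x + c3)"
    using cet by (rule cet3_flip1E) blast
  define P :: "nat \<Rightarrow> real set" where
    "P i = (case i of 0 \<Rightarrow> {0<..<a1} | Suc 0 \<Rightarrow> {a1<..<a2} | Suc (Suc 0) \<Rightarrow> {a2<..<1} | _ \<Rightarrow> {})"
    for i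
  show ?thesis
  proof (rule emeasure_image_pieces[where P = P])
    show "P i \<in> sets lborel" for i unfolding P_def by (simp split: nat.split)
    have mem_P: "x \<in> P i \<Longrightarrow> (i = 0 \<and> x < a1) \<or> (i = 1 \<and> a1 < x \<and> x < a2) \<or> (i = 2 \<and> a2 < x)"
      for i x unfolding P_def by (auto split: nat.splits)
    show "disjoint_family P"
      unfolding disjoint_family_on_def
    proof (intro ballI impI)
      fix i j :: nat assume "i \<noteq> j"
      show "P i \<inter> P j = {}" using mem_P[of _ i] mem_P[of _ j] \<open>i \<noteq> j\<close> ord by fastforce
    qed
    show "B \<subseteq> (\<Union>i. P i)"
    proof
      fix x assume "x \<in> B"
      then have "x \<in> P 0 \<or> x \<in> P (Suc 0) \<or> x \<in> P (Suc (Suc 0))"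
        using \<open>B \<subseteq> cet_dom a1 a2\<close> unfolding cet_dom_def P_def by auto
      then show "x \<in> (\<Union>i. P i)" by blast
    qed
    show "inj_on T B" using inj \<open>B \<subseteq> cet_dom a1 a2\<close> by (rule inj_on_subset)
    fix i X assume X: "X \<in> sets lborel" "X \<subseteq> B \<inter> P i"
    then have "X \<subseteq> cet_dom a1 a2" using \<open>B \<subseteq> cet_dom a1 a2\<close> by auto
    have "inj_on T X" using inj \<open>X \<subseteq> cet_dom a1 a2\<close> by (rule inj_on_subset)
    consider "X \<subseteq> {0<..<a1}" | "X \<subseteq> {a1<..<a2}" | "X \<subseteq> {a2<..<1}" | "X = {}"
      using X(2) unfolding P_def by (auto split: nat.splits)
    then show "T ` X \<in> sets lborel \<and> emeasure lborel (T ` X) = emeasure lborel X"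
    proof cases
      case 1
      show ?thesis by (rule emeasure_lborel_frac_affine_image[of "-1"]) (use X \<open>inj_on T X\<close> 1 T1 in auto)
    next
      case 2
      show ?thesis by (rule emeasure_lborel_frac_affine_image[of 1]) (use X \<open>inj_on T X\<close> 2 T2 in auto)
    next
      case 3
      show ?thesis by (rule emeasure_lborel_frac_affine_image[of 1]) (use X \<open>inj_on T X\<close> 3 T3 in auto)
    qed simp
  qed (use B in auto)
qed

lemma cet3_flip1_iter_img:
  assumes cet: "cet3_flip1 T a1 a2" and J: "J \<in> sets lborel" "J \<subseteq> {0..<1}"
  shows "iter_img T (cet_dom a1 a2) n J \<in> sets lborel
       \<and> emeasure lborel (iter_img T (cet_dom a1 a2) n J) = emeasure lborel J
       \<and> iter_img T (cet_dom a1 a2) n J \<subseteq> {0..<1}"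
proof (induction n)
  case (Suc n)
  let ?F = "iter_img T (cet_dom a1 a2) n J"
  obtain c1 c2 c3 where "0 < a1" "a1 < a2" "a2 < 1" using cet by (rule cet3_flip1E) blast
  then have G_eq: "?F \<inter> cet_dom a1 a2 = ?F - {0, a1, a2}"
    using Suc.IH unfolding cet_dom_def by auto
  have G: "?F \<inter> cet_dom a1 a2 \<in> sets lborel"
    "emeasure lborel (?F \<inter> cet_dom a1 a2) = emeasure lborel J"
    unfolding G_eq using Suc.IH emeasure_Diff_null_set[OF finite_imp_null_set_lborel, of "{0, a1, a2}"]
    by auto
  have "T ` (?F \<inter> cet_dom a1 a2) \<in> sets lborel
      \<and> emeasure lborel (T ` (?F \<inter> cet_dom a1 a2)) = emeasure lborel J"
    using cet3_flip1_emeasure_image[OF cet G(1)] G(2) by auto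
  moreover have "T ` (?F \<inter> cet_dom a1 a2) \<subseteq> {0..<1}" using cet3_flip1_range[OF cet] by auto
  ultimately show ?case by (simp add: iter_img_Suc)
qed (use J in simp)

lemma emeasure_disjoint_family_bound:
  assumes "\<And>i. i < K \<Longrightarrow> F i \<in> sets M \<and> F i \<subseteq> S \<and> emeasure M (F i) = c"
    and "disjoint_family_on F {..<K}" and "S \<in> sets M"
  shows "of_nat K * c \<le> emeasure M S"
proof -
  have "of_nat K * c = (\<Sum>i<K. emeasure M (F i))" using assms(1) by simp
  also have "\<dots> = emeasure M (\<Union>i<K. F i)"
    by (rule sum_emeasure) (use assms in auto)
  also have "\<dots> \<le> emeasure M S" by (rule emeasure_mono) (use assms in auto)
  finally show ?thesis .
qed

lemma cet3_flip1_returns: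
  assumes cet: "cet3_flip1 T a1 a2"
  shows "\<exists>d\<ge>1. iter_img T (cet_dom a1 a2) d {0<..<a1} \<inter> {0<..<a1} \<noteq> {}"
proof (rule ccontr)
  assume "\<not> ?thesis"
  then have no_return: "\<forall>k\<in>{1..<K}. iter_img T (cet_dom a1 a2) k {0<..<a1} \<inter> {0<..<a1} = {}"
    for K by auto
  obtain c1 c2 c3 where ord: "0 < a1" "a1 < a2" "a2 < 1" and inj: "inj_on T (cet_dom a1 a2)"
    using cet by (rule cet3_flip1E) blast
  have Ioo_subset: "{0<..<a1} \<subseteq> {0..<1}" using ord by auto
  define K where "K = nat \<lceil>2 / a1\<rceil>"
  have "real K \<ge> 2 / a1" unfolding K_def by linarith
  then have K: "real K * a1 \<ge> 2" using ord by (simp add: field_simps)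
  have images: "iter_img T (cet_dom a1 a2) k {0<..<a1} \<in> sets lborel
      \<and> iter_img T (cet_dom a1 a2) k {0<..<a1} \<subseteq> {0..<1}
      \<and> emeasure lborel (iter_img T (cet_dom a1 a2) k {0<..<a1}) = ennreal a1" for k
    using cet3_flip1_iter_img[OF cet _ Ioo_subset, of k] ord by auto
  have "disjoint_family_on (\<lambda>k. iter_img T (cet_dom a1 a2) k {0<..<a1}) {..<K}"
    unfolding disjoint_family_on_def using iter_img_disjoint_before_return[OF inj no_return] by blast
  then have "of_nat K * ennreal a1 \<le> emeasure lborel {0..<1::real}"
    by (rule emeasure_disjoint_family_bound[rotated]) (use images in auto)
  then have "ennreal (real K * a1) \<le> 1"
    using ord by (simp add: ennreal_mult ennreal_of_nat_eq_real_of_nat)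
  then have "real K * a1 \<le> 1" by (metis ennreal_1 ennreal_le_iff zero_le_one)
  with K show False by simp
qed

lemma frac_diff_frac_diff:
  assumes "0 \<le> x" "x < 1"
  shows "frac (c - frac (c - x)) = x"
proof -
  have "c - frac (c - x) = x + of_int \<lfloor>c - x\<rfloor>" by (simp add: frac_def)
  then show ?thesis using assms by (simp add: frac_eq)
qed

lemma cet3_flip1_no_return_at_1:
  assumes cet: "cet3_flip1 T a1 a2" and aperiodic: "\<not> has_periodic_point T (cet_dom a1 a2)"
  shows "iter_img T (cet_dom a1 a2) 1 {0<..<a1} \<inter> {0<..<a1} = {}"
proof (rule ccontr)
  assume "\<not> ?thesis"
  then obtain q where q: "q \<in> {0<..<a1}" and Tq: "T q \<in> {0<..<a1}"
    unfolding iter_img_def iter_dom_def by force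
  obtain c1 c2 c3 where ord: "0 < a1" "a1 < a2" "a2 < 1"
    and T1: "\<And>x. x \<in> {0<..<a1} \<Longrightarrow> T x = frac (c1 - x)"
    using cet by (rule cet3_flip1E) blast
  have "(T ^^ 2) q = q"
    using T1[OF q] T1[OF Tq] frac_diff_frac_diff[of q c1] q ord
    by (simp add: numeral_2_eq_2)
  moreover have "q \<in> iter_dom T (cet_dom a1 a2) 2"
    unfolding iter_dom_def using q Tq by (auto simp: cet_dom_def less_2_cases_iff)
  ultimately show False
    using aperiodic unfolding has_periodic_point_def by (metis one_le_numeral)
qed

theorem lemma3p3:
  fixes T :: "real \<Rightarrow> real" and a1 a2 :: real
  assumes "cet3_flip1 T a1 a2"
    and "cyc_sets (T ` {0<..<a1}) (T ` {a2<..<1}) (T ` {a1<..<a2})"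
    and "\<not> has_periodic_point T (cet_dom a1 a2)"
  shows "\<exists>N\<ge>2.
           (\<forall>n\<in>{1..N-1}. iter_img T (cet_dom a1 a2) n {0<..<a1} \<inter> {0<..<a1} = {}) \<and>
           iter_img T (cet_dom a1 a2) N {0<..<a1} \<inter> {0<..<a1} \<noteq> {} \<and>
           (\<forall>m<N. \<forall>n<N. m \<noteq> n \<longrightarrow>
              iter_img T (cet_dom a1 a2) m {0<..<a1} \<inter> iter_img T (cet_dom a1 a2) n {0<..<a1} = {})"
proof -
  have inj: "inj_on T (cet_dom a1 a2)" using assms(1) by (rule cet3_flip1E) blast
  obtain N where "N \<ge> 1"
    and "\<forall>n\<in>{1..N-1}. iter_img T (cet_dom a1 a2) n {0<..<a1} \<inter> {0<..<a1} = {}"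
    and return: "iter_img T (cet_dom a1 a2) N {0<..<a1} \<inter> {0<..<a1} \<noteq> {}"
    and "\<forall>m<N. \<forall>n<N. m \<noteq> n \<longrightarrow>
           iter_img T (cet_dom a1 a2) m {0<..<a1} \<inter> iter_img T (cet_dom a1 a2) n {0<..<a1} = {}"
    using first_return[OF inj cet3_flip1_returns[OF assms(1)]] by blast
  moreover have "N \<noteq> 1" using return cet3_flip1_no_return_at_1[OF assms(1,3)] by auto
  ultimately show ?thesis by (intro exI[of _ N]) auto
qed

end
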